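(* Let $H\subset S_n$ be a permutation group, let $A\trianglelefteq\mathbb{Z}_2^{*n}$ be an $H$-invariant normal subgroup, and let $\Gamma=\mathbb{Z}_2^{*n}/A$. Let $u$ be the fundamental representation of the quantum group $\mathbb{G}=\hat\Gamma\rtimes H$. Then for all $k,l\in\mathbb{N}_0$, $$\mathrm{Mor}(u^{\otimes k},u^{\otimes l})=\mathrm{span}\{\hat T^{\mathbf{a}\mathbf{b}}_H\mid[\mathbf{a},\mathbf{b}]\in W_H(k,l)\text{ such that }g_{\mathbf{a}\mathbf{b}^*}\in A\},$$ and the family $\{\hat T^{\mathbf{a}\mathbf{b}}_H\}_{[\mathbf{a},\mathbf{b}]\in W_H(k,l)}$ (one map per class) is linearly independent.
   Context: $\mathbb{Z}_2^{*n}$ is the group generated by $1,\dots,n$ subject to $i^2=e$; $S_n$ acts on it by permuting generators, and $A$ is $H$-invariant if $\sigma(A)=A$ for all $\sigma\in H$. For a tuple $\mathbf{a}=(a_1,\dots,a_k)$ over $\{1,\dots,n\}$, $\mathbf{a}^*$ is the reversed tuple, $\mathbf{a}\mathbf{b}^*$ denotes concatenation, and $g_{\mathbf{c}}=c_1c_2\cdots$ is the corresponding group element (so $g_{\mathbf{a}\mathbf{b}^*}=g_{\mathbf{a}}g_{\mathbf{b}}^{-1}$). Quantum groups: an orthogonal compact matrix quantum group is $(O(\mathbb{G}),u)$ with $O(\mathbb{G})$ a $*$-algebra generated by entries of $u\in M_n(O(\mathbb{G}))$, $u_{ij}=u_{ij}^*$, $uu^t=u^tu=1$, and $u_{ij}\mapsto\sum_k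 u_{ik}\otimes u_{kj}$ extending to a $*$-homomorphism; $\mathrm{Mor}(u^{\otimes k},u^{\otimes l})=\{T\colon(\mathbb{C}^n)^{\otimes k}\to(\mathbb{C}^n)^{\otimes l}\mid Tu^{\otimes k}=u^{\otimes l}T\}$. $H$ is the quantum group $(O(H),v)$ with $v_{ij}(\sigma)=\delta_{i\sigma(j)}$. With $\gamma_i\in\mathbb{C}\Gamma$ the image of the generator $i$, $\hat\Gamma\rtimes H$ is the quantum group $(\mathbb{C}\Gamma\otimes O(H),u)$ with $u_{ij}=\gamma_i\otimes v_{ij}$. $W_H(k,l)$ is the set of orbits $[\mathbf{a},\mathbf{b}]$ of pairs $(\mathbf{a},\mathbf{b})\in\{1,\dots,n\}^k\times\{1,\dots,n\}^l$ under the diagonal action of $H$. $\hat T^{\mathbf{a}\mathbf{b}}_H\colon(\mathbb{C}^n)^{\otimes k}\to(\mathbb{C}^n)^{\otimes l}$ is the linear map with entries $[\hat T^{\mathbf{a}\mathbf{b}}_H]_{\mathbf{j}\mathbf{i}}=\#\{\phi\in H\mid\phi(\mathbf{a})=\mathbf{i},\phi(\mathbf{b})=\mathbf{j}\}$ (coefficient of $e_{j_1}\otimes\cdots\otimes e_{j_l}$ in the image of $e_{i_1}\otimes\cdots\otimes e_{i_k}$); it depends only on $[\mathbf{a},\mathbf{b}]$, and the condition $g_{\mathbf{a}\mathbf{b}^*}\in A$ depends only on the class since $A$ is $H$-invariant. *)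

theory Defs
  imports "HOL-Algebra.Sym_Groups" "HOL-Algebra.Coset" Complex_Main
begin

text \<open>Prepend a generator to a reduced word, cancelling since i*i = e.\<close>
fun cons_red :: "nat \<Rightarrow> nat list \<Rightarrow> nat list" where
  "cons_red a [] = [a]"
| "cons_red a (b # ys) = (if a = b then ys else a # b # ys)"

text \<open>Reduced form of a word = the group element g_c = c_1 c_2 ... c_m.\<close>
definition red :: "nat list \<Rightarrow> nat list" where
  "red xs = foldr cons_red xs []"

definition Z2free :: "nat \<Rightarrow> nat list monoid" where
  "Z2free n = \<lparr> carrier = {w. set w \<subseteq> {1..n} \<and> successively (\<noteq>) w},
                mult = (\<lambda>x y. foldr cons_red x y), one = [] \<rparr>"

definition Gam :: "nat \<Rightarrow> nat list set \<Rightarrow> nat list set monoid" where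
  "Gam n A = Z2free n Mod A"

definition gam :: "nat \<Rightarrow> nat list set \<Rightarrow> nat \<Rightarrow> nat list set" where
  "gam n A i = A #>\<^bsub>Z2free n\<^esub> [i]"

text \<open>Elements of C Gamma: finitely supported functions Gamma -> C; product = convolution.
  Elements of C Gamma (x) O(H) (H finite) are identified with functions H -> C Gamma,
  i.e. functions sigma -> x -> coefficient; the product is pointwise in sigma.\<close>
definition conv :: "('g, 'm) monoid_scheme \<Rightarrow> ('g \<Rightarrow> complex) \<Rightarrow> ('g \<Rightarrow> complex) \<Rightarrow> 'g \<Rightarrow> complex" where
  "conv G f g x = (\<Sum>y\<in>{y\<in>carrier G. f y \<noteq> 0}. f y * g (inv\<^bsub>G\<^esub> y \<otimes>\<^bsub>G\<^esub> x))"

definition amul :: "('g, 'm) monoid_scheme \<Rightarrow> ('p \<Rightarrow> 'g \<Rightarrow> complex) \<Rightarrow> ('p \<Rightarrow> 'g \<Rightarrow> complex) \<Rightarrow> 'p \<Rightarrow> 'g \<Rightarrow> complex" where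
  "amul G a b = (\<lambda>\<sigma>. conv G (a \<sigma>) (b \<sigma>))"

definition aone :: "('g, 'm) monoid_scheme \<Rightarrow> 'p \<Rightarrow> 'g \<Rightarrow> complex" where
  "aone G = (\<lambda>\<sigma> x. if x = \<one>\<^bsub>G\<^esub> then 1 else 0)"

text \<open>Fundamental representation u_{ij} = gamma_i (x) v_{ij}, with v_{ij}(sigma) = delta_{i, sigma(j)}.\<close>
definition uu :: "nat \<Rightarrow> nat list set \<Rightarrow> nat \<Rightarrow> nat \<Rightarrow> (nat \<Rightarrow> nat) \<Rightarrow> nat list set \<Rightarrow> complex" where
  "uu n A i j = (\<lambda>\<sigma> x. (if i = \<sigma> j then 1 else 0) * (if x = gam n A i then 1 else 0))"

definition utens :: "nat \<Rightarrow> nat list set \<Rightarrow> nat list \<Rightarrow> nat list \<Rightarrow> (nat \<Rightarrow> nat) \<Rightarrow> nat list set \<Rightarrow> complex" where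
  "utens n A is js = foldr (\<lambda>(i, j) acc. amul (Gam n A) (uu n A i j) acc) (zip is js) (aone (Gam n A))"

text \<open>Multi-indices of length k over {1..n} (basis of (C^n)^{(x)k}).\<close>
definition idx :: "nat \<Rightarrow> nat \<Rightarrow> nat list set" where
  "idx n k = {c. length c = k \<and> set c \<subseteq> {1..n}}"

text \<open>A linear map (C^n)^{(x)k} -> (C^n)^{(x)l} is its matrix T j i (j output, i input),
  vanishing outside the index sets.\<close>
definition linmaps :: "nat \<Rightarrow> nat \<Rightarrow> nat \<Rightarrow> (nat list \<Rightarrow> nat list \<Rightarrow> complex) set" where
  "linmaps n k l = {T. \<forall>j i. (j \<notin> idx n l \<or> i \<notin> idx n k) \<longrightarrow> T j i = 0}"

text \<open>Mor(u^{(x)k}, u^{(x)l}) = {T | T u^{(x)k} = u^{(x)l} T}; equality in C Gamma (x) O(H)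
  is checked at every sigma in H and every x in Gamma.\<close>
definition Mor :: "nat \<Rightarrow> (nat \<Rightarrow> nat) set \<Rightarrow> nat list set \<Rightarrow> nat \<Rightarrow> nat \<Rightarrow> (nat list \<Rightarrow> nat list \<Rightarrow> complex) set" where
  "Mor n H A k l = {T \<in> linmaps n k l. \<forall>j\<in>idx n l. \<forall>i\<in>idx n k. \<forall>\<sigma>\<in>H. \<forall>x\<in>carrier (Gam n A).
      (\<Sum>c\<in>idx n k. T j c * utens n A c i \<sigma> x) = (\<Sum>d\<in>idx n l. utens n A j d \<sigma> x * T d i)}"

definition cspan :: "('a \<Rightarrow> 'b \<Rightarrow> complex) set \<Rightarrow> ('a \<Rightarrow> 'b \<Rightarrow> complex) set" where
  "cspan S = {T. \<exists>F c. finite F \<and> F \<subseteq> S \<and> T = (\<lambda>j i. \<Sum>M\<in>F. c M * M j i)}"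

definition That :: "(nat \<Rightarrow> nat) set \<Rightarrow> nat list \<Rightarrow> nat list \<Rightarrow> nat list \<Rightarrow> nat list \<Rightarrow> complex" where
  "That H a b = (\<lambda>j i. of_nat (card {\<phi>\<in>H. map \<phi> a = i \<and> map \<phi> b = j}))"

definition WH :: "(nat \<Rightarrow> nat) set \<Rightarrow> nat \<Rightarrow> nat \<Rightarrow> nat \<Rightarrow> (nat list \<times> nat list) set set" where
  "WH H n k l = {{(map \<phi> a, map \<phi> b) | \<phi>. \<phi> \<in> H} | a b. a \<in> idx n k \<and> b \<in> idx n l}"

text \<open>hat T for an orbit class (independent of the chosen representative).\<close>
definition That_cls :: "(nat \<Rightarrow> nat) set \<Rightarrow> (nat list \<times> nat list) set \<Rightarrow> nat list \<Rightarrow> nat list \<Rightarrow> complex" where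
  "That_cls H w = (let p = (SOME p. p \<in> w) in That H (fst p) (snd p))"

end

theory Submission
  imports Defs
begin

text \<open>Since u_{ij} = \<gamma>_i \<otimes> v_{ij}, the entry (u^{\<otimes>k})_{c,i} is the function
  (\<sigma>, x) \<mapsto> [\<sigma>(i) = c] [x = A g_c]. Evaluating the intertwining relation at row \<sigma>(j), both
  sides collapse to one term each, and comparing them shows that T is an intertwiner iff it is
  H-invariant and vanishes at every (i, j) with g_{ij*} \<notin> A. Averaging over H writes such a T
  as (1/|H|) \<Sum>_{a,b} T_{ba} T^{ab}_H, with only pairs g_{ab*} \<in> A contributing. Independence
  holds because T^{ab}_H is supported exactly on the orbit [a,b] and nonzero at (a, b).\<close>

lemma successively_cons_red: "successively (\<noteq>) ys \<Longrightarrow> successively (\<noteq>) (cons_red a ys)"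
  by (cases ys) (auto simp: successively_Cons)

lemma set_cons_red: "set (cons_red a ys) \<subseteq> insert a (set ys)"
  by (cases ys) auto

lemma cons_red_cons_red: "successively (\<noteq>) ys \<Longrightarrow> cons_red a (cons_red a ys) = ys"
  by (cases ys rule: remdups_adj.cases) (auto simp: successively_Cons)

lemma successively_foldr_cons_red:
  "successively (\<noteq>) z \<Longrightarrow> successively (\<noteq>) (foldr cons_red x z)"
  by (induction x) (auto intro: successively_cons_red)

lemma set_foldr_cons_red: "set (foldr cons_red x z) \<subseteq> set x \<union> set z"
  by (induction x) (use set_cons_red in fastforce)+

lemma red_Nil: "red [] = []"
  by (simp add: red_def)

lemma red_Cons: "red (a # x) = cons_red a (red x)"
  by (simp add: red_def)

lemma red_append: "red (x @ y) = foldr cons_red x (red y)"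
  by (simp add: red_def)

lemma successively_red: "successively (\<noteq>) (red x)"
  unfolding red_def by (rule successively_foldr_cons_red) simp

lemma set_red: "set (red x) \<subseteq> set x"
  unfolding red_def using set_foldr_cons_red[of x "[]"] by simp

lemma foldr_cons_red_cons_red:
  assumes "successively (\<noteq>) z" and "successively (\<noteq>) w"
  shows "foldr cons_red (cons_red a w) z = cons_red a (foldr cons_red w z)"
proof (cases w)
  case (Cons b ys)
  have "successively (\<noteq>) (foldr cons_red ys z)"
    using assms(1) by (rule successively_foldr_cons_red)
  then show ?thesis using Cons cons_red_cons_red by auto
qed simp

lemma foldr_cons_red_red:
  "successively (\<noteq>) z \<Longrightarrow> foldr cons_red (red x) z = foldr cons_red x z"
  by (induction x) (simp_all add: red_Nil red_Cons foldr_cons_red_cons_red successively_red)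

lemma foldr_cons_red_append_rev_self:
  "successively (\<noteq>) z \<Longrightarrow> foldr cons_red (x @ rev x) z = z"
proof (induction x arbitrary: z)
  case (Cons a x)
  then have "foldr cons_red (x @ rev x) (cons_red a z) = cons_red a z"
    using successively_cons_red by blast
  then show ?case using Cons.prems cons_red_cons_red by simp
qed simp

lemma red_append_rev_self: "red (x @ rev x) = []"
  unfolding red_def using foldr_cons_red_append_rev_self[of "[]" x] by simp

lemma red_map: "inj \<sigma> \<Longrightarrow> red (map \<sigma> x) = map \<sigma> (red x)"
proof (induction x)
  case (Cons a x)
  then show ?case by (cases "red x") (auto simp: red_Cons dest: injD)
qed (simp add: red_Nil)

lemma finite_idx: "finite (idx n k)"
  using finite_lists_length_eq[of "{1..n}" k] by (simp add: idx_def conj_commute)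

lemma Z2free_mult: "x \<otimes>\<^bsub>Z2free n\<^esub> y = foldr cons_red x y"
  by (simp add: Z2free_def)

lemma Z2free_one: "\<one>\<^bsub>Z2free n\<^esub> = []"
  by (simp add: Z2free_def)

lemma red_in_carrier: "set x \<subseteq> {1..n} \<Longrightarrow> red x \<in> carrier (Z2free n)"
  using successively_red[of x] set_red[of x] by (auto simp: Z2free_def)

lemma Z2free_mult_red: "red x \<otimes>\<^bsub>Z2free n\<^esub> red y = red (x @ y)"
  by (simp add: Z2free_mult foldr_cons_red_red successively_red red_append)

lemma Z2free_inv_red:
  assumes "group (Z2free n)" and "set x \<subseteq> {1..n}"
  shows "inv\<^bsub>Z2free n\<^esub> red x = red (rev x)"
proof -
  have "red (rev x) \<otimes>\<^bsub>Z2free n\<^esub> red x = \<one>\<^bsub>Z2free n\<^esub>"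
    using red_append_rev_self[of "rev x"] by (simp add: Z2free_mult_red Z2free_one)
  then show ?thesis
    using assms red_in_carrier by (metis group.inv_equality set_rev)
qed

lemma ball_scaled_deltas_eq_iff:
  assumes "C \<in> X" and "D \<in> X"
  shows "(\<forall>x\<in>X. a * of_bool (x = C) = of_bool (x = D) * (b :: 'a :: comm_ring_1)) \<longleftrightarrow>
    (if C = D then a = b else a = 0 \<and> b = 0)"
proof (cases "C = D")
  case False
  show ?thesis
  proof
    assume eq: "\<forall>x\<in>X. a * of_bool (x = C) = of_bool (x = D) * b"
    have "a = 0" using eq[rule_format, OF assms(1)] False by simp
    moreover have "b = 0" using eq[rule_format, OF assms(2)] False by simp
    ultimately show "if C = D then a = b else a = 0 \<and> b = 0" using False by simp
  qed (use False in auto)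
qed (use assms in auto)

locale Z2free_quotient =
  fixes n :: nat and A :: "nat list set"
  assumes normal: "normal A (Z2free n)"
begin

sublocale normal A "Z2free n"
  by (rule normal)

abbreviation word_class :: "nat list \<Rightarrow> nat list set" where
  "word_class c \<equiv> A #>\<^bsub>Z2free n\<^esub> red c"

lemma Gam_is_group: "group (Gam n A)"
  unfolding Gam_def by (rule factorgroup_is_group)

lemma word_class_in_carrier: "set c \<subseteq> {1..n} \<Longrightarrow> word_class c \<in> carrier (Gam n A)"
  unfolding Gam_def FactGroup_def using rcosetsI[OF subset red_in_carrier] by simp

lemma word_class_Nil: "word_class [] = \<one>\<^bsub>Gam n A\<^esub>"
  using coset_join2[OF one_closed is_subgroup subgroup.one_closed[OF is_subgroup]]
  by (simp add: red_Nil Z2free_one Gam_def)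

lemma gam_mult_word_class:
  assumes "i \<in> {1..n}" and "set c \<subseteq> {1..n}"
  shows "gam n A i \<otimes>\<^bsub>Gam n A\<^esub> word_class c = word_class (i # c)"
proof -
  have "[i] \<in> carrier (Z2free n)" using assms(1) by (simp add: Z2free_def)
  then have "gam n A i \<otimes>\<^bsub>Gam n A\<^esub> word_class c
      = A #>\<^bsub>Z2free n\<^esub> ([i] \<otimes>\<^bsub>Z2free n\<^esub> red c)"
    unfolding gam_def Gam_def using rcos_sum red_in_carrier[OF assms(2)] by simp
  then show ?thesis by (simp add: Z2free_mult red_Cons)
qed

lemma word_class_eq_iff:
  assumes "set c \<subseteq> {1..n}" and "set d \<subseteq> {1..n}"
  shows "word_class c = word_class d \<longleftrightarrow> red (c @ rev d) \<in> A"
proof -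
  have c: "red c \<in> carrier (Z2free n)" and d: "red d \<in> carrier (Z2free n)"
    using assms red_in_carrier by auto
  have "word_class c = word_class d \<longleftrightarrow> red c \<in> word_class d"
    using repr_independence[OF _ d is_subgroup] repr_independenceD[OF is_subgroup c] by blast
  also have "\<dots> \<longleftrightarrow> red c \<otimes>\<^bsub>Z2free n\<^esub> inv\<^bsub>Z2free n\<^esub> red d \<in> A"
    using rcos_module[OF is_group d c] .
  also have "red c \<otimes>\<^bsub>Z2free n\<^esub> inv\<^bsub>Z2free n\<^esub> red d = red (c @ rev d)"
    using Z2free_inv_red[OF is_group assms(2)] Z2free_mult_red by simp
  finally show ?thesis .
qed

lemma utens_eq:
  assumes "length c = length i" and "set c \<subseteq> {1..n}" and "x \<in> carrier (Gam n A)"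
  shows "utens n A c i \<sigma> x = of_bool (map \<sigma> i = c \<and> x = word_class c)"
  using assms
proof (induction c arbitrary: i x)
  case Nil
  then show ?case by (simp add: utens_def aone_def word_class_Nil)
next
  case (Cons a c)
  interpret Q: group "Gam n A" by (rule Gam_is_group)
  obtain b i' where i: "i = b # i'" using Cons.prems(1) by (cases i) auto
  have a: "a \<in> {1..n}" and c: "set c \<subseteq> {1..n}" using Cons.prems(2) by auto
  have g: "gam n A a \<in> carrier (Gam n A)"
    using word_class_in_carrier[of "[a]"] a by (simp add: gam_def red_Cons red_Nil)
  have step:
    "utens n A (a # c) i \<sigma> x = conv (Gam n A) (uu n A a b \<sigma>) (utens n A c i' \<sigma>) x"
    by (simp add: utens_def amul_def i)
  show ?case
  proof (cases "a = \<sigma> b")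
    case False
    then show ?thesis unfolding step conv_def by (simp add: uu_def i)
  next
    case True
    have supp: "{y \<in> carrier (Gam n A). uu n A a b \<sigma> y \<noteq> 0} = {gam n A a}"
      using True g by (auto simp: uu_def)
    have "utens n A (a # c) i \<sigma> x
        = utens n A c i' \<sigma> (inv\<^bsub>Gam n A\<^esub> gam n A a \<otimes>\<^bsub>Gam n A\<^esub> x)"
      unfolding step conv_def supp using True by (simp add: uu_def)
    also have "\<dots>
        = of_bool (map \<sigma> i' = c \<and> inv\<^bsub>Gam n A\<^esub> gam n A a \<otimes>\<^bsub>Gam n A\<^esub> x = word_class c)"
      using Cons.IH Cons.prems i c g by simp
    also have "inv\<^bsub>Gam n A\<^esub> gam n A a \<otimes>\<^bsub>Gam n A\<^esub> x = word_class c
        \<longleftrightarrow> x = word_class (a # c)"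
      using Q.inv_solve_left[OF word_class_in_carrier[OF c] g Cons.prems(3)]
        gam_mult_word_class[OF a c]
      by metis
    finally show ?thesis using True i by auto
  qed
qed

lemma sum_utens_left:
  assumes "i \<in> idx n k" and "map \<sigma> i \<in> idx n k" and "x \<in> carrier (Gam n A)"
  shows "(\<Sum>c\<in>idx n k. M c * utens n A c i \<sigma> x)
    = M (map \<sigma> i) * of_bool (x = word_class (map \<sigma> i))"
proof -
  have "(\<Sum>c\<in>idx n k. M c * utens n A c i \<sigma> x)
      = (\<Sum>c\<in>idx n k. if c = map \<sigma> i then M c * of_bool (x = word_class c) else 0)"
    using assms by (intro sum.cong) (auto simp: utens_eq idx_def)
  then show ?thesis using assms(2) finite_idx by simp
qed

lemma sum_utens_right:
  assumes "inj \<sigma>" and "j \<in> idx n l" and "map \<sigma> j \<in> idx n l" and "x \<in> carrier (Gam n A)"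
  shows "(\<Sum>d\<in>idx n l. utens n A (map \<sigma> j) d \<sigma> x * M d)
    = of_bool (x = word_class (map \<sigma> j)) * M j"
proof -
  have "map \<sigma> d = map \<sigma> j \<longleftrightarrow> d = j" for d
    using assms(1) by (simp add: inj_map_eq_map)
  then have "(\<Sum>d\<in>idx n l. utens n A (map \<sigma> j) d \<sigma> x * M d)
      = (\<Sum>d\<in>idx n l. if d = j then of_bool (x = word_class (map \<sigma> j)) * M j else 0)"
    using assms by (intro sum.cong) (auto simp: utens_eq idx_def)
  then show ?thesis using assms(2) finite_idx by simp
qed

end

abbreviation pair_orbit ::
    "(nat \<Rightarrow> nat) set \<Rightarrow> nat list \<Rightarrow> nat list \<Rightarrow> (nat list \<times> nat list) set" where
  "pair_orbit H a b \<equiv> {(map \<phi> a, map \<phi> b) | \<phi>. \<phi> \<in> H}"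

locale perm_subgroup =
  fixes n :: nat and H :: "(nat \<Rightarrow> nat) set"
  assumes subgroup: "subgroup H (sym_group n)"
begin

lemma mem_imp_permutes: "\<sigma> \<in> H \<Longrightarrow> \<sigma> permutes {1..n}"
  using subgroup.subset[OF subgroup] sym_group_carrier by blast

lemma mem_imp_inj: "\<sigma> \<in> H \<Longrightarrow> inj \<sigma>"
  using mem_imp_permutes permutes_inj by blast

lemma id_mem: "id \<in> H"
  using subgroup.one_closed[OF subgroup] by (simp add: sym_group_one)

lemma comp_mem: "\<sigma> \<in> H \<Longrightarrow> \<tau> \<in> H \<Longrightarrow> \<sigma> \<circ> \<tau> \<in> H"
  using subgroup.m_closed[OF subgroup] by (simp add: sym_group_mult)

lemma inv_mem: "\<sigma> \<in> H \<Longrightarrow> inv' \<sigma> \<in> H"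
  using subgroup.m_inv_closed[OF subgroup] subgroup.subset[OF subgroup] by fastforce

lemma comp_inv [simp]:
  "\<sigma> \<in> H \<Longrightarrow> \<sigma> \<circ> inv' \<sigma> = id" "\<sigma> \<in> H \<Longrightarrow> inv' \<sigma> \<circ> \<sigma> = id"
  using mem_imp_permutes permutes_inv_o by blast+

lemma map_inv_map [simp]:
  "\<sigma> \<in> H \<Longrightarrow> map \<sigma> (map (inv' \<sigma>) c) = c" "\<sigma> \<in> H \<Longrightarrow> map (inv' \<sigma>) (map \<sigma> c) = c"
  by (simp_all flip: comp_def[of \<sigma> "inv' \<sigma>"] comp_def[of "inv' \<sigma>" \<sigma>])

lemma map_eq_iff_eq_map_inv: "\<sigma> \<in> H \<Longrightarrow> map \<sigma> a = c \<longleftrightarrow> a = map (inv' \<sigma>) c"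
  by (metis map_inv_map)

lemma finite_H: "finite H"
  by (rule finite_subset[OF _ finite_permutations[OF finite_atLeastAtMost]])
    (blast intro: mem_imp_permutes)

lemma map_in_idx_iff: "\<sigma> \<in> H \<Longrightarrow> map \<sigma> c \<in> idx n k \<longleftrightarrow> c \<in> idx n k"
  using permutes_in_image[OF mem_imp_permutes] by (auto simp: idx_def)

lemma bij_betw_comp_left: "\<sigma> \<in> H \<Longrightarrow> bij_betw ((\<circ>) \<sigma>) H H"
  by (rule bij_betw_byWitness[where f' = "(\<circ>) (inv' \<sigma>)"])
    (auto simp: comp_mem inv_mem simp flip: comp_assoc)

lemma bij_betw_comp_right: "\<sigma> \<in> H \<Longrightarrow> bij_betw (\<lambda>\<phi>. \<phi> \<circ> \<sigma>) H H"
  by (rule bij_betw_byWitness[where f' = "\<lambda>\<phi>. \<phi> \<circ> inv' \<sigma>"])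
    (auto simp: comp_mem inv_mem comp_assoc)

lemma That_eq_sum:
  "That H a b j i = (\<Sum>\<phi>\<in>H. of_bool (map \<phi> a = i \<and> map \<phi> b = j))"
  using finite_H by (simp add: That_def Collect_conj_eq Int_commute)

lemma That_map_entries:
  assumes "\<sigma> \<in> H"
  shows "That H a b (map \<sigma> j) (map \<sigma> i) = That H a b j i"
proof -
  have "That H a b (map \<sigma> j) (map \<sigma> i)
      = (\<Sum>\<phi>\<in>H. of_bool (map (\<sigma> \<circ> \<phi>) a = map \<sigma> i \<and> map (\<sigma> \<circ> \<phi>) b = map \<sigma> j))"
    unfolding That_eq_sum
    by (rule sum.reindex_bij_betw[OF bij_betw_comp_left[OF assms], symmetric])
  also have "\<dots> = That H a b j i"
    unfolding That_eq_sum using mem_imp_inj[OF assms] by (simp flip: map_map add: inj_map_eq_map)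
  finally show ?thesis .
qed

lemma That_map:
  assumes "\<sigma> \<in> H"
  shows "That H (map \<sigma> a) (map \<sigma> b) = That H a b"
proof (intro ext)
  fix j i
  show "That H (map \<sigma> a) (map \<sigma> b) j i = That H a b j i"
    unfolding That_eq_sum map_map by (rule sum.reindex_bij_betw[OF bij_betw_comp_right[OF assms]])
qed

lemma That_neq_zero_iff: "That H a b j i \<noteq> 0 \<longleftrightarrow> (i, j) \<in> pair_orbit H a b"
  using finite_H by (auto simp: That_def card_eq_0_iff)

lemma That_self_neq_zero: "That H a b b a \<noteq> 0"
  using That_neq_zero_iff id_mem by force

lemma That_in_linmaps:
  assumes "a \<in> idx n k" and "b \<in> idx n l"
  shows "That H a b \<in> linmaps n k l"
  unfolding linmaps_def
proof (intro CollectI allI impI)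
  fix j i
  assume "j \<notin> idx n l \<or> i \<notin> idx n k"
  then have "(i, j) \<notin> pair_orbit H a b"
    using assms map_in_idx_iff by auto
  then show "That H a b j i = 0"
    using That_neq_zero_iff by blast
qed

lemma pair_orbit_map:
  assumes "\<phi> \<in> H"
  shows "pair_orbit H (map \<phi> a) (map \<phi> b) = pair_orbit H a b"
proof -
  have "(\<lambda>\<psi>. (map \<psi> (map \<phi> a), map \<psi> (map \<phi> b))) ` H
      = (\<lambda>\<psi>. (map \<psi> a, map \<psi> b)) ` ((\<lambda>\<psi>. \<psi> \<circ> \<phi>) ` H)"
    by (simp add: image_image)
  also have "(\<lambda>\<psi>. \<psi> \<circ> \<phi>) ` H = H"
    using bij_betw_comp_right[OF assms] by (simp add: bij_betw_def)
  finally show ?thesis by (simp add: setcompr_eq_image)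
qed

lemma That_cls_pair_orbit: "That_cls H (pair_orbit H a b) = That H a b"
proof -
  have "(a, b) \<in> pair_orbit H a b"
    using id_mem by force
  then have "(SOME p. p \<in> pair_orbit H a b) \<in> pair_orbit H a b"
    by (rule someI)
  then obtain \<phi> where "(SOME p. p \<in> pair_orbit H a b) = (map \<phi> a, map \<phi> b)" and "\<phi> \<in> H"
    by blast
  then show ?thesis
    unfolding That_cls_def Let_def by (simp add: That_map)
qed

lemma finite_WH: "finite (WH H n k l)"
proof -
  have "WH H n k l = (\<lambda>(a, b). pair_orbit H a b) ` (idx n k \<times> idx n l)"
    unfolding WH_def by auto
  then show ?thesis
    using finite_idx by simp
qed

lemma That_cls_linear_independent:
  assumes comb: "(\<lambda>j i. \<Sum>w\<in>WH H n k l. c w * That_cls H w j i) = (\<lambda>j i. 0)"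
    and w0: "w0 \<in> WH H n k l"
  shows "c w0 = 0"
proof -
  obtain a b where w0_eq: "w0 = pair_orbit H a b"
    using w0 unfolding WH_def by blast
  have others: "c w * That_cls H w b a = 0" if w_mem: "w \<in> WH H n k l - {w0}" for w
  proof -
    obtain a' b' where w: "w = pair_orbit H a' b'"
      using w_mem unfolding WH_def by blast
    have "That H a' b' b a = 0"
    proof (rule ccontr)
      assume "That H a' b' b a \<noteq> 0"
      then obtain \<phi> where "\<phi> \<in> H" "a = map \<phi> a'" "b = map \<phi> b'"
        using That_neq_zero_iff by blast
      then have "w0 = w" using w w0_eq pair_orbit_map by simp
      then show False using w_mem by blast
    qed
    then show ?thesis using w That_cls_pair_orbit by simp
  qed
  have "0 = (\<Sum>w\<in>WH H n k l. c w * That_cls H w b a)"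
    using fun_cong[OF fun_cong[OF comb, of b], of a] by simp
  also have "\<dots>
      = c w0 * That_cls H w0 b a + (\<Sum>w\<in>WH H n k l - {w0}. c w * That_cls H w b a)"
    using finite_WH w0 by (rule sum.remove)
  also have "\<dots> = c w0 * That H a b b a"
    using others w0_eq That_cls_pair_orbit by (simp add: sum.neutral)
  finally show ?thesis
    using That_self_neq_zero by simp
qed

end

definition invariant_maps :: "nat \<Rightarrow> (nat \<Rightarrow> nat) set \<Rightarrow> nat list set \<Rightarrow> nat \<Rightarrow> nat \<Rightarrow>
    (nat list \<Rightarrow> nat list \<Rightarrow> complex) set" where
  "invariant_maps n H A k l = {T \<in> linmaps n k l.
     (\<forall>i\<in>idx n k. \<forall>j\<in>idx n l. red (i @ rev j) \<notin> A \<longrightarrow> T j i = 0) \<and>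
     (\<forall>\<sigma>\<in>H. \<forall>i\<in>idx n k. \<forall>j\<in>idx n l. T (map \<sigma> j) (map \<sigma> i) = T j i)}"

lemma invariant_mapsD:
  assumes "T \<in> invariant_maps n H A k l"
  shows "T \<in> linmaps n k l"
    and "i \<in> idx n k \<Longrightarrow> j \<in> idx n l \<Longrightarrow> red (i @ rev j) \<notin> A \<Longrightarrow> T j i = 0"
    and "\<sigma> \<in> H \<Longrightarrow> i \<in> idx n k \<Longrightarrow> j \<in> idx n l \<Longrightarrow> T (map \<sigma> j) (map \<sigma> i) = T j i"
  using assms unfolding invariant_maps_def by blast+

lemma sum_in_invariant_maps:
  assumes "F \<subseteq> invariant_maps n H A k l"
  shows "(\<lambda>j i. \<Sum>M\<in>F. c M * M j i) \<in> invariant_maps n H A k l"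
  using assms unfolding invariant_maps_def linmaps_def
  by (auto intro!: sum.neutral sum.cong simp: subset_iff)

lemma sum_in_cspan:
  assumes "finite P" and "g ` P \<subseteq> S"
  shows "(\<lambda>j i. \<Sum>p\<in>P. c p * g p j i) \<in> cspan S"
proof -
  define d where "d M = (\<Sum>p\<in>{p \<in> P. g p = M}. c p)" for M
  have "(\<Sum>p\<in>P. c p * g p j i) = (\<Sum>M\<in>g ` P. d M * M j i)" for j i
    unfolding d_def sum_distrib_right
    using sum.image_gen[OF assms(1), of "\<lambda>p. c p * g p j i" g]
    by (auto intro!: sum.cong)
  then show ?thesis
    unfolding cspan_def using assms by blast
qed

locale invariant_quotient = Z2free_quotient n A + perm_subgroup n H
  for n :: nat and A :: "nat list set" and H :: "(nat \<Rightarrow> nat) set" +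
  assumes map_image_A: "\<sigma> \<in> H \<Longrightarrow> map \<sigma> ` A = A"
begin

lemma red_map_mem_iff:
  assumes "\<sigma> \<in> H"
  shows "red (map \<sigma> a @ rev (map \<sigma> b)) \<in> A \<longleftrightarrow> red (a @ rev b) \<in> A"
proof -
  have "red (map \<sigma> a @ rev (map \<sigma> b)) = map \<sigma> (red (a @ rev b))"
    using red_map[OF mem_imp_inj[OF assms], of "a @ rev b"] by (simp add: rev_map)
  then show ?thesis
    using map_image_A[OF assms] mem_imp_inj[OF assms] by (metis inj_image_mem_iff inj_mapI)
qed

lemma That_in_invariant_maps:
  assumes a: "a \<in> idx n k" and b: "b \<in> idx n l" and ab: "red (a @ rev b) \<in> A"
  shows "That H a b \<in> invariant_maps n H A k l"
proof -
  have "That H a b j i = 0" if "red (i @ rev j) \<notin> A" for i j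
  proof (rule ccontr)
    assume "That H a b j i \<noteq> 0"
    then obtain \<phi> where "\<phi> \<in> H" "i = map \<phi> a" "j = map \<phi> b"
      using That_neq_zero_iff by blast
    then show False using that ab red_map_mem_iff by blast
  qed
  then show ?thesis
    unfolding invariant_maps_def using That_in_linmaps[OF a b] That_map_entries by blast
qed

lemma intertwiner_eq_iff:
  assumes \<sigma>: "\<sigma> \<in> H" and i: "i \<in> idx n k" and j: "j \<in> idx n l"
  shows "(\<forall>x\<in>carrier (Gam n A). (\<Sum>c\<in>idx n k. T (map \<sigma> j) c * utens n A c i \<sigma> x)
            = (\<Sum>d\<in>idx n l. utens n A (map \<sigma> j) d \<sigma> x * T d i))
    \<longleftrightarrow> (if red (i @ rev j) \<in> A then T (map \<sigma> j) (map \<sigma> i) = T j i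
        else T (map \<sigma> j) (map \<sigma> i) = 0 \<and> T j i = 0)" (is "_ \<longleftrightarrow> ?cond")
proof -
  have \<sigma>i: "map \<sigma> i \<in> idx n k" and \<sigma>j: "map \<sigma> j \<in> idx n l"
    using i j map_in_idx_iff[OF \<sigma>] by auto
  then have "set (map \<sigma> i) \<subseteq> {1..n}" and "set (map \<sigma> j) \<subseteq> {1..n}"
    by (simp_all add: idx_def)
  then have C: "word_class (map \<sigma> i) \<in> carrier (Gam n A)"
    and D: "word_class (map \<sigma> j) \<in> carrier (Gam n A)"
    and CD: "word_class (map \<sigma> i) = word_class (map \<sigma> j) \<longleftrightarrow> red (i @ rev j) \<in> A"
    using word_class_in_carrier word_class_eq_iff red_map_mem_iff[OF \<sigma>] by auto
  have "(\<forall>x\<in>carrier (Gam n A). (\<Sum>c\<in>idx n k. T (map \<sigma> j) c * utens n A c i \<sigma> x)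
            = (\<Sum>d\<in>idx n l. utens n A (map \<sigma> j) d \<sigma> x * T d i))
    \<longleftrightarrow> (\<forall>x\<in>carrier (Gam n A).
          T (map \<sigma> j) (map \<sigma> i) * of_bool (x = word_class (map \<sigma> i))
            = of_bool (x = word_class (map \<sigma> j)) * T j i)"
    using sum_utens_left[OF i \<sigma>i] sum_utens_right[OF mem_imp_inj[OF \<sigma>] j \<sigma>j] by simp
  also have "\<dots> \<longleftrightarrow> ?cond"
    by (rule ball_scaled_deltas_eq_iff[OF C D, unfolded CD])
  finally show ?thesis .
qed

lemma Mor_eq_invariant_maps: "Mor n H A k l = invariant_maps n H A k l"
proof (rule Set.set_eqI)
  fix T :: "nat list \<Rightarrow> nat list \<Rightarrow> complex"
  let ?eq = "\<lambda>\<sigma> i j. if red (i @ rev j) \<in> A then T (map \<sigma> j) (map \<sigma> i) = T j i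
        else T (map \<sigma> j) (map \<sigma> i) = 0 \<and> T j i = 0"
  have reindex: "(\<forall>j\<in>idx n l. \<forall>i\<in>idx n k. \<forall>\<sigma>\<in>H. P j i \<sigma>)
      \<longleftrightarrow> (\<forall>\<sigma>\<in>H. \<forall>i\<in>idx n k. \<forall>j\<in>idx n l. P (map \<sigma> j) i \<sigma>)" for P
    by (metis map_in_idx_iff map_inv_map(1) inv_mem)
  have "T \<in> Mor n H A k l
      \<longleftrightarrow> T \<in> linmaps n k l \<and> (\<forall>\<sigma>\<in>H. \<forall>i\<in>idx n k. \<forall>j\<in>idx n l. ?eq \<sigma> i j)"
    unfolding Mor_def using reindex intertwiner_eq_iff by simp
  also have "\<dots> \<longleftrightarrow> T \<in> invariant_maps n H A k l"
  proof -
    have "(\<forall>\<sigma>\<in>H. \<forall>i\<in>idx n k. \<forall>j\<in>idx n l. ?eq \<sigma> i j) \<longleftrightarrow>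
      (\<forall>i\<in>idx n k. \<forall>j\<in>idx n l. red (i @ rev j) \<notin> A \<longrightarrow> T j i = 0) \<and>
      (\<forall>\<sigma>\<in>H. \<forall>i\<in>idx n k. \<forall>j\<in>idx n l. T (map \<sigma> j) (map \<sigma> i) = T j i)"
      using id_mem by (auto split: if_splits) (metis list.map_id)+
    then show ?thesis
      unfolding invariant_maps_def by blast
  qed
  finally show "T \<in> Mor n H A k l \<longleftrightarrow> T \<in> invariant_maps n H A k l" .
qed

text \<open>Each \<phi> \<in> H contributes the single pair (\<phi>\<inverse> i, \<phi>\<inverse> j), whose coefficient equals
  \<open>T j i\<close> by invariance.\<close>

lemma sum_That_eq_card_mult:
  assumes T: "T \<in> invariant_maps n H A k l"
  shows "(\<Sum>(a, b)\<in>idx n k \<times> idx n l. T b a * That H a b j i) = of_nat (card H) * T j i"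
proof (cases "i \<in> idx n k \<and> j \<in> idx n l")
  case True
  have inner:
    "(\<Sum>(a, b)\<in>idx n k \<times> idx n l. T b a * of_bool (map \<phi> a = i \<and> map \<phi> b = j)) = T j i"
    if \<phi>: "\<phi> \<in> H" for \<phi>
  proof -
    let ?a = "map (inv' \<phi>) i" and ?b = "map (inv' \<phi>) j"
    have mem: "(?a, ?b) \<in> idx n k \<times> idx n l"
      using True map_in_idx_iff[OF inv_mem[OF \<phi>]] by simp
    have "(\<Sum>(a, b)\<in>idx n k \<times> idx n l. T b a * of_bool (map \<phi> a = i \<and> map \<phi> b = j))
        = (\<Sum>p\<in>idx n k \<times> idx n l. if p = (?a, ?b) then T ?b ?a else 0)"
      by (rule sum.cong) (auto simp: map_eq_iff_eq_map_inv[OF \<phi>])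
    also have "\<dots> = T ?b ?a"
      using mem finite_idx by simp
    also have "\<dots> = T (map \<phi> ?b) (map \<phi> ?a)"
      using mem by (intro invariant_mapsD(3)[OF T \<phi>, symmetric]) auto
    finally show ?thesis using \<phi> by simp
  qed
  have "(\<Sum>(a, b)\<in>idx n k \<times> idx n l. T b a * That H a b j i)
      = (\<Sum>\<phi>\<in>H. \<Sum>(a, b)\<in>idx n k \<times> idx n l.
            T b a * of_bool (map \<phi> a = i \<and> map \<phi> b = j))"
    unfolding That_eq_sum sum_distrib_left case_prod_beta by (rule sum.swap)
  also have "\<dots> = of_nat (card H) * T j i"
    using inner by simp
  finally show ?thesis .
next
  case False
  have "T j i = 0"
    using invariant_mapsD(1)[OF T] False unfolding linmaps_def by blast
  moreover have "That H a b j i = 0" if "a \<in> idx n k" "b \<in> idx n l" for a b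
    using That_in_linmaps[OF that] False unfolding linmaps_def by blast
  ultimately show ?thesis
    by (auto intro: sum.neutral)
qed

lemma invariant_map_eq_average:
  assumes T: "T \<in> invariant_maps n H A k l"
  defines "P \<equiv> {(a, b) \<in> idx n k \<times> idx n l. red (a @ rev b) \<in> A}"
  shows "T = (\<lambda>j i. \<Sum>p\<in>P. T (snd p) (fst p) / of_nat (card H) * That H (fst p) (snd p) j i)"
proof (intro ext)
  fix j i
  have "card H \<noteq> 0"
    using finite_H id_mem by auto
  have "(\<Sum>(a, b)\<in>P. T b a * That H a b j i)
      = (\<Sum>(a, b)\<in>idx n k \<times> idx n l. T b a * That H a b j i)"
    using invariant_mapsD(2)[OF T]
    by (intro sum.mono_neutral_left) (auto simp: P_def finite_idx, metis)
  also have "\<dots> = of_nat (card H) * T j i"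
    by (rule sum_That_eq_card_mult[OF T])
  finally have "(\<Sum>(a, b)\<in>P. T b a * That H a b j i) / of_nat (card H) = T j i"
    using \<open>card H \<noteq> 0\<close> by simp
  then show
    "T j i = (\<Sum>p\<in>P. T (snd p) (fst p) / of_nat (card H) * That H (fst p) (snd p) j i)"
    unfolding sum_divide_distrib by (simp add: case_prod_beta)
qed

lemma invariant_maps_eq_cspan:
  "invariant_maps n H A k l
    = cspan {That H a b | a b. a \<in> idx n k \<and> b \<in> idx n l \<and> red (a @ rev b) \<in> A}"
  (is "_ = cspan ?S")
proof
  show "cspan ?S \<subseteq> invariant_maps n H A k l"
  proof
    fix T assume "T \<in> cspan ?S"
    then obtain F c where F: "F \<subseteq> ?S" and T: "T = (\<lambda>j i. \<Sum>M\<in>F. c M * M j i)"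
      unfolding cspan_def by blast
    have "?S \<subseteq> invariant_maps n H A k l"
      by (auto simp: That_in_invariant_maps)
    then show "T \<in> invariant_maps n H A k l"
      unfolding T using F by (intro sum_in_invariant_maps) blast
  qed
next
  show "invariant_maps n H A k l \<subseteq> cspan ?S"
  proof
    fix T assume T: "T \<in> invariant_maps n H A k l"
    define P where "P = {(a, b) \<in> idx n k \<times> idx n l. red (a @ rev b) \<in> A}"
    have "P \<subseteq> idx n k \<times> idx n l"
      by (auto simp: P_def)
    then have "finite P"
      by (rule finite_subset) (simp add: finite_idx)
    moreover have "(\<lambda>p. That H (fst p) (snd p)) ` P \<subseteq> ?S"
      unfolding P_def by fastforce
    ultimately have
      "(\<lambda>j i. \<Sum>p\<in>P. T (snd p) (fst p) / of_nat (card H) * That H (fst p) (snd p) j i) \<in> cspan ?S"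
      by (rule sum_in_cspan)
    then show "T \<in> cspan ?S"
      unfolding P_def by (subst invariant_map_eq_average[OF T])
  qed
qed

end

theorem theorem5p11:
  fixes n k l :: nat and H :: "(nat \<Rightarrow> nat) set" and A :: "nat list set"
  assumes "subgroup H (sym_group n)"
    and "normal A (Z2free n)"
    and "\<forall>\<sigma>\<in>H. map \<sigma> ` A = A"
  shows "Mor n H A k l = cspan {That H a b | a b. a \<in> idx n k \<and> b \<in> idx n l \<and> red (a @ rev b) \<in> A}
    \<and> (\<forall>c. (\<lambda>j i. \<Sum>w\<in>WH H n k l. c w * That_cls H w j i) = (\<lambda>j i. 0)
             \<longrightarrow> (\<forall>w\<in>WH H n k l. c w = 0))"
proof -
  interpret invariant_quotient n A H
    using assms by (simp add: invariant_quotient_def invariant_quotient_axioms_def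
        Z2free_quotient_def perm_subgroup_def)
  show ?thesis
    using Mor_eq_invariant_maps invariant_maps_eq_cspan That_cls_linear_independent by blast
qed

end
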